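(* Let $m,n\ge1$ be integers, $A=(a_{ij})$ an $n\times m$ real matrix and $q_{\max}>1$. Run the Iterated LLL-algorithm (ILLL) on $A$ and $q_{\max}$, producing for each integer $k$ with $1\le k\le k'$ a vector $q(k)=(q_1(k),\dots,q_m(k))\in\mathbb Z^m$. Then for every such $k$, $$\max_j|q_j(k)|\le 2^{\frac{(m+n-1)(m+n)}{4m}}\,2^{\frac{kn}{m}}\quad\text{and}\quad \max_i\|q_1(k)a_{i1}+\dots+q_m(k)a_{im}\|\le 2^{-k}.$$
   Context: $\|x\|$ denotes the distance from $x\in\mathbb R$ to the nearest integer. A basis $b_1,\dots,b_r$ of $\mathbb R^r$ with Gram–Schmidt vectors $b_i^*=b_i-\sum_{j<i}\mu_{ij}b_j^*$, $\mu_{ij}=(b_i,b_j^* )/(b_j^*,b_j^* )$, is reduced if $|\mu_{ij}|\le\frac12$ ($j<i$) and $|b_i^*+\mu_{i,i-1}b_{i-1}^*|^2\ge\frac34|b_{i-1}^*|^2$ ($1<i\le r$); the LLL-algorithm returns a reduced basis of the lattice generated by its input basis. The ILLL-algorithm: put $k'=\left\lceil -\frac{(m+n-1)(m+n)}{4n}+\frac{m\log_2 q_{\max}}{n}\right\rceil$ and, for $k\ge1$, $c(k)=\left(2^{-\frac{m+n+3}{4}-k+1}\right)^{\frac{m+n}{m}}$. Start with the basis given by the columns of $B=\begin{pmatrix} I_n & A\\ 0& c(1)I_m\end{pmatrix}$. In iteration $k=1,\dots,k'$: apply the LLL-algorithm to the current basis; from the first vector of the reduced basis, which has the form $(q_1a_{11}+\dots+q_ma_{1m}-p_1,\dots,q_1a_{n1}+\dots+q_ma_{nm}-p_n,c(k)q_1,\dots,c(k)q_m)^T$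 with $p_i,q_j\in\mathbb Z$, output $q(k)=(q_1,\dots,q_m)$; then divide the last $m$ coordinates of all basis vectors by $2^{\frac{m+n}{m}}$ (so the lattice in iteration $k$ is the one generated by the columns of $B$ with $c(1)$ replaced by $c(k)$). *)

theory Defs
  imports Complex_Main
begin

text \<open>Vectors of R^r are represented as functions nat => real, only indices < r matter.
  A basis b of R^r is a family b 0, ..., b (r-1) (0-based indexing).\<close>

definition ip :: "nat \<Rightarrow> (nat \<Rightarrow> real) \<Rightarrow> (nat \<Rightarrow> real) \<Rightarrow> real" where
  "ip r x y = (\<Sum>t<r. x t * y t)"

function gso :: "nat \<Rightarrow> (nat \<Rightarrow> nat \<Rightarrow> real) \<Rightarrow> nat \<Rightarrow> nat \<Rightarrow> real" where
  "gso r b i = (\<lambda>t. b i t - (\<Sum>j<i. (ip r (b i) (gso r b j) / ip r (gso r b j) (gso r b j)) * gso r b j t))"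
  by auto
termination by (relation "measure (\<lambda>(r, b, i). i)") auto

definition gs_mu :: "nat \<Rightarrow> (nat \<Rightarrow> nat \<Rightarrow> real) \<Rightarrow> nat \<Rightarrow> nat \<Rightarrow> real" where
  "gs_mu r b i j = ip r (b i) (gso r b j) / ip r (gso r b j) (gso r b j)"

definition lll_reduced :: "nat \<Rightarrow> (nat \<Rightarrow> nat \<Rightarrow> real) \<Rightarrow> bool" where
  "lll_reduced r b \<longleftrightarrow>
     (\<forall>i<r. \<forall>j<i. \<bar>gs_mu r b i j\<bar> \<le> 1/2) \<and>
     (\<forall>i. 1 \<le> i \<and> i < r \<longrightarrow>
        ip r (\<lambda>t. gso r b i t + gs_mu r b i (i-1) * gso r b (i-1) t)
             (\<lambda>t. gso r b i t + gs_mu r b i (i-1) * gso r b (i-1) t)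
        \<ge> 3/4 * ip r (gso r b (i-1)) (gso r b (i-1)))"

text \<open>The lattice vector B * (p;q)-type vector: coordinates i<n are
  q_1 a_{i1}+...+q_m a_{im} - p_i, coordinates n+j (j<m) are c q_j.\<close>
definition lvec :: "nat \<Rightarrow> nat \<Rightarrow> (nat \<Rightarrow> nat \<Rightarrow> real) \<Rightarrow> real \<Rightarrow> (nat \<Rightarrow> int) \<Rightarrow> (nat \<Rightarrow> int) \<Rightarrow> nat \<Rightarrow> real" where
  "lvec m n A c p q t =
     (if t < n then (\<Sum>j<m. of_int (q j) * A t j) - of_int (p t)
      else if t < n + m then c * of_int (q (t - n)) else 0)"

text \<open>b is a basis of the lattice generated by the columns of
  B = [[I_n, A],[0, c I_m]] (a basis of R^(m+n) generating that lattice).\<close>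
definition lattice_basis :: "nat \<Rightarrow> nat \<Rightarrow> (nat \<Rightarrow> nat \<Rightarrow> real) \<Rightarrow> real \<Rightarrow> (nat \<Rightarrow> nat \<Rightarrow> real) \<Rightarrow> bool" where
  "lattice_basis m n A c b \<longleftrightarrow>
     (\<forall>i<m+n. \<exists>p q. \<forall>t<m+n. b i t = lvec m n A c p q t) \<and>
     (\<forall>p q. \<exists>z::nat \<Rightarrow> int. \<forall>t<m+n. lvec m n A c p q t = (\<Sum>i<m+n. of_int (z i) * b i t)) \<and>
     (\<forall>x::nat \<Rightarrow> real. (\<forall>t<m+n. (\<Sum>i<m+n. x i * b i t) = 0) \<longrightarrow> (\<forall>i<m+n. x i = 0))"

definition ccoef :: "nat \<Rightarrow> nat \<Rightarrow> nat \<Rightarrow> real" where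
  "ccoef m n k = (2 powr (- (real (m+n) + 3) / 4 - real k + 1)) powr (real (m+n) / real m)"

definition kprime :: "nat \<Rightarrow> nat \<Rightarrow> real \<Rightarrow> int" where
  "kprime m n qmax = \<lceil>- (real (m+n) - 1) * real (m+n) / (4 * real n) + real m * log 2 qmax / real n\<rceil>"

definition dni :: "real \<Rightarrow> real" where
  "dni x = min (x - of_int \<lfloor>x\<rfloor>) (of_int \<lceil>x\<rceil> - x)"

end

theory Submission imports Defs "Jordan_Normal_Form.Determinant" begin

text \<open>
  For an LLL-reduced basis the size condition |mu_{i,i-1}| <= 1/2 and the Lovasz condition give
  |b*_{i-1}|^2 <= 2 |b*_i|^2, hence |b_1|^2 <= 2^(i-1) |b*_i|^2 and
  |b_1|^(2r) <= 2^(r(r-1)/2) prod_i |b*_i|^2 = 2^(r(r-1)/2) det(L)^2.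
  The reduced basis and the columns of B generate the same lattice, so they differ by a
  unimodular integer matrix and det(L)^2 = det(B)^2 = c^(2m). For c = c(k) the right-hand side
  is 2^(-2kr), i.e. |b_1| <= 2^(-k). Each coordinate of b_1 is bounded by |b_1|: the first n are
  q_1 a_i1 + ... + q_m a_im - p_i, the last m are c(k) q_j.
\<close>

declare gso.simps[simp del]

lemma gso_eq: "gso r b i t = b i t - (\<Sum>j<i. gs_mu r b i j * gso r b j t)"
  by (subst gso.simps) (simp add: gs_mu_def)

lemma gso_0: "gso r b 0 t = b 0 t"
  by (subst gso_eq) simp

lemma ip_commute: "ip r x y = ip r y x"
  by (simp add: ip_def mult.commute)

lemma ip_self_nonneg: "ip r x x \<ge> 0"
  by (simp add: ip_def sum_nonneg)

lemma ip_eq_0_if_self_eq_0: assumes "ip r x x = 0" shows "ip r y x = 0"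
proof -
  have "\<forall>t\<in>{..<r}. x t * x t = 0"
    using assms unfolding ip_def by (subst sum_nonneg_eq_0_iff[symmetric]) auto
  then show ?thesis by (simp add: ip_def)
qed

lemma coord_square_le_ip: assumes "t < r" shows "(x t)\<^sup>2 \<le> ip r x x"
  unfolding ip_def power2_eq_square
  by (rule member_le_sum[where f = "\<lambda>t. x t * x t"]) (use assms in auto)

lemma ip_add_scaled_self:
  "ip r (\<lambda>t. x t + mu * y t) (\<lambda>t. x t + mu * y t) = ip r x x + 2 * mu * ip r x y + mu\<^sup>2 * ip r y y"
  by (simp add: ip_def power2_eq_square algebra_simps sum.distrib sum_distrib_left)

lemma ip_gso_left:
  "ip r (gso r b i) z = ip r (b i) z - (\<Sum>j<i. gs_mu r b i j * ip r (gso r b j) z)"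
proof -
  have "ip r (gso r b i) z = (\<Sum>t<r. b i t * z t - (\<Sum>j<i. gs_mu r b i j * gso r b j t) * z t)"
    unfolding ip_def by (simp add: gso_eq[of r b i] left_diff_distrib)
  also have "\<dots> = ip r (b i) z - (\<Sum>t<r. \<Sum>j<i. gs_mu r b i j * gso r b j t * z t)"
    by (simp add: ip_def sum_subtractf sum_distrib_right)
  also have "(\<Sum>t<r. \<Sum>j<i. gs_mu r b i j * gso r b j t * z t) = (\<Sum>j<i. gs_mu r b i j * ip r (gso r b j) z)"
    by (subst sum.swap) (simp add: ip_def sum_distrib_left mult.assoc)
  finally show ?thesis .
qed

lemma gso_orthogonal: "l < i \<Longrightarrow> ip r (gso r b i) (gso r b l) = 0"
proof (induction i arbitrary: l rule: less_induct)
  case (less i)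
  have "ip r (gso r b j) (gso r b l) = 0" if "j < i" "j \<noteq> l" for j
    using less.IH[of j l] less.IH[of l j] less.prems that ip_commute by (metis linorder_neqE_nat)
  then have "(\<Sum>j<i. gs_mu r b i j * ip r (gso r b j) (gso r b l))
      = (\<Sum>j<i. if j = l then gs_mu r b i l * ip r (gso r b l) (gso r b l) else 0)"
    by (intro sum.cong) auto
  then have "ip r (gso r b i) (gso r b l) = ip r (b i) (gso r b l) - gs_mu r b i l * ip r (gso r b l) (gso r b l)"
    using less.prems by (subst ip_gso_left) simp
  also have "\<dots> = 0"
    using ip_eq_0_if_self_eq_0[of r "gso r b l" "b i"] by (cases "ip r (gso r b l) (gso r b l) = 0") (simp_all add: gs_mu_def)
  finally show ?case .
qed

lemma mat_times_mat: "mat r r f * mat r r g = mat r r (\<lambda>(i,j). \<Sum>k<r. f(i,k) * g(k,j))"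
  by (rule eq_matI) (auto simp: scalar_prod_def atLeast0LessThan)

lemma map_mat_mat: "map_mat h (mat r r f) = mat r r (\<lambda>x. h (f x))"
  by (rule eq_matI) auto

lemma prod_list_map_upt: "prod_list (map g [0..<r]) = (\<Prod>i<r. g i)"
  by (induct r) (auto simp: mult.commute)

lemma det_mat_lower_triangular: assumes "\<And>i j. i < j \<Longrightarrow> j < r \<Longrightarrow> f(i,j) = 0"
  shows "det (mat r r f) = (\<Prod>i<r. f(i,i))"
proof -
  have "det (mat r r f) = prod_list (diag_mat (mat r r f))"
    by (rule det_lower_triangular[of r]) (auto simp: assms)
  then show ?thesis by (simp add: diag_mat_def prod_list_map_upt)
qed

lemma sum_lessThan_if_less: assumes "i \<le> (r::nat)"
  shows "(\<Sum>k<r. if k < i then f k else 0) = (\<Sum>k<i. f k)"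
proof -
  have "{k\<in>{..<r}. k < i} = {..<i}" using assms by auto
  then show ?thesis using sum.inter_filter[of "{..<r}" f "\<lambda>k. k < i"] by simp
qed

text \<open>The basis matrix factors as M G with M unitriangular (entries mu_ij) and G the matrix
  of the orthogonal Gram--Schmidt vectors, so its determinant squared is det (G G^T).\<close>
lemma det_square_eq_prod_gso:
  "det (mat r r (\<lambda>(i,t). b i t)) ^ 2 = (\<Prod>i<r. ip r (gso r b i) (gso r b i))"
proof -
  define G where "G = mat r r (\<lambda>(i,t). gso r b i t)"
  define M where "M = mat r r (\<lambda>(i,j). if j < i then gs_mu r b i j else if i = j then 1 else (0::real))"
  have carrier: "G \<in> carrier_mat r r" "M \<in> carrier_mat r r" by (auto simp: G_def M_def)
  have "mat r r (\<lambda>(i,t). b i t) = M * G"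
    unfolding M_def G_def mat_times_mat
  proof (rule eq_matI, simp_all)
    fix i t assume "i < r"
    have "b i t = (\<Sum>k<i. gs_mu r b i k * gso r b k t) + gso r b i t"
      by (subst gso_eq) simp
    also have "\<dots> = (\<Sum>k<r. (if k < i then gs_mu r b i k * gso r b k t else 0) + (if k = i then gso r b i t else 0))"
      using \<open>i < r\<close> by (simp add: sum.distrib sum_lessThan_if_less)
    also have "\<dots> = (\<Sum>k<r. (if k < i then gs_mu r b i k else if i = k then 1 else 0) * gso r b k t)"
      by (rule sum.cong) auto
    finally show "b i t = \<dots>" .
  qed
  moreover have "det M = 1"
    unfolding M_def by (subst det_mat_lower_triangular) auto
  ultimately have det_b: "det (mat r r (\<lambda>(i,t). b i t)) = det G"
    using det_mult[OF carrier(2,1)] by simp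
  have transpose_G: "transpose_mat G = mat r r (\<lambda>(t,i). gso r b i t)"
    unfolding G_def by (rule eq_matI) auto
  have Gram: "G * transpose_mat G = mat r r (\<lambda>(i,j). ip r (gso r b i) (gso r b j))"
    unfolding transpose_G unfolding G_def mat_times_mat by (simp add: ip_def)
  have "det (G * transpose_mat G) = (\<Prod>i<r. ip r (gso r b i) (gso r b i))"
    unfolding Gram by (subst det_mat_lower_triangular) (auto intro: trans[OF ip_commute gso_orthogonal])
  moreover have "det (G * transpose_mat G) = det G * det G"
    using det_mult[OF carrier(1), of "transpose_mat G"] det_transpose[OF carrier(1)] carrier(1) by simp
  ultimately show ?thesis using det_b by (simp add: power2_eq_square)
qed

lemma lll_gso_pred_le:
  assumes red: "lll_reduced r b" and i: "1 \<le> i" "i < r"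
  shows "ip r (gso r b (i-1)) (gso r b (i-1)) \<le> 2 * ip r (gso r b i) (gso r b i)"
proof -
  let ?mu = "gs_mu r b i (i-1)"
  let ?N = "ip r (gso r b (i-1)) (gso r b (i-1))"
  have lovasz: "ip r (\<lambda>t. gso r b i t + ?mu * gso r b (i-1) t) (\<lambda>t. gso r b i t + ?mu * gso r b (i-1) t)
        \<ge> 3/4 * ?N" using red i unfolding lll_reduced_def by auto
  have "\<bar>?mu\<bar> \<le> 1/2" using red i unfolding lll_reduced_def by auto
  then have "?mu\<^sup>2 \<le> (1/2)\<^sup>2"
    by (metis abs_ge_zero power2_abs power_mono)
  then have "?mu\<^sup>2 * ?N \<le> 1/4 * ?N"
    by (intro mult_right_mono) (simp_all add: power2_eq_square ip_self_nonneg)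
  moreover have "ip r (gso r b i) (gso r b (i-1)) = 0" using gso_orthogonal i by simp
  ultimately show ?thesis using lovasz unfolding ip_add_scaled_self by simp
qed

lemma lll_first_le_gso:
  assumes red: "lll_reduced r b" and "i < r"
  shows "ip r (b 0) (b 0) \<le> 2^i * ip r (gso r b i) (gso r b i)"
  using \<open>i < r\<close>
proof (induction i)
  case 0 then show ?case by (simp add: gso_0 ip_def)
next
  case (Suc i)
  have "ip r (b 0) (b 0) \<le> 2^i * ip r (gso r b i) (gso r b i)" using Suc by simp
  also have "\<dots> \<le> 2^i * (2 * ip r (gso r b (Suc i)) (gso r b (Suc i)))"
    using lll_gso_pred_le[OF red, of "Suc i"] Suc.prems by simp
  finally show ?case by simp
qed

lemma sum_lessThan_id_real: "(\<Sum>i<r. real i) = real r * (real r - 1) / 2"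
  by (induct r) (auto simp: field_simps)

lemma lll_first_pow_le_det_square:
  assumes "lll_reduced r b"
  shows "ip r (b 0) (b 0) ^ r \<le> 2 powr (real r * (real r - 1) / 2) * det (mat r r (\<lambda>(i,t). b i t)) ^ 2"
proof -
  have "ip r (b 0) (b 0) ^ r = (\<Prod>i<r. ip r (b 0) (b 0))" by simp
  also have "\<dots> \<le> (\<Prod>i<r. 2^i * ip r (gso r b i) (gso r b i))"
    by (rule prod_mono) (auto simp: ip_self_nonneg lll_first_le_gso[OF assms])
  also have "\<dots> = 2 ^ (\<Sum>i<r. i) * (\<Prod>i<r. ip r (gso r b i) (gso r b i))"
    by (simp add: prod.distrib power_sum)
  also have "\<dots> = 2 powr (real r * (real r - 1) / 2) * det (mat r r (\<lambda>(i,t). b i t)) ^ 2"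
    by (simp add: powr_realpow[symmetric] sum_lessThan_id_real det_square_eq_prod_gso)
  finally show ?thesis .
qed

lemma det_square_eq_if_integral_transitions:
  fixes B C :: "real mat" and U V :: "int mat"
  assumes carrier: "B \<in> carrier_mat r r" "C \<in> carrier_mat r r" "U \<in> carrier_mat r r" "V \<in> carrier_mat r r"
    and BC: "B = map_mat of_int U * C" and CB: "C = map_mat of_int V * B" and "det C \<noteq> 0"
  shows "det B ^ 2 = det C ^ 2"
proof -
  have det_B: "det B = of_int (det U) * det C"
    using BC det_mult[of "map_mat of_int U" r C] carrier by simp
  have "det C = of_int (det V) * det B"
    using CB det_mult[of "map_mat of_int V" r B] carrier by simp
  then have "(of_int (det V * det U) - 1) * det C = 0"
    unfolding det_B by (simp add: algebra_simps)
  then have "det V * det U = 1"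
    using \<open>det C \<noteq> 0\<close> by (metis eq_iff_diff_eq_0 mult_eq_0_iff of_int_eq_1_iff)
  then have "det U = 1 \<or> det U = -1" by (auto simp: zmult_eq_1_iff)
  then show ?thesis using det_B by auto
qed

definition illl_column :: "nat \<Rightarrow> (nat \<Rightarrow> nat \<Rightarrow> real) \<Rightarrow> real \<Rightarrow> nat \<Rightarrow> nat \<Rightarrow> real" where
  "illl_column n A c s t =
     (if s < n then (if t = s then 1 else 0) else if t < n then A t (s - n) else if t = s then c else 0)"

lemma sum_add_lessThan: "(\<Sum>s<n+(m::nat). f s) = (\<Sum>s<n. f s) + (\<Sum>j<m. f (n+j))"
  by (induct m) (auto simp: add.assoc)

lemma prod_add_lessThan: "(\<Prod>s<n+(m::nat). f s) = (\<Prod>s<n. f s) * (\<Prod>j<m. f (n+j))"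
  by (induct m) (auto simp: mult.assoc)

lemma lvec_eq_sum_illl_column:
  assumes "t < m + n"
  shows "lvec m n A c p q t = (\<Sum>s<m+n. of_int (if s < n then - p s else q (s-n)) * illl_column n A c s t)"
proof -
  have "(\<Sum>s<m+n. of_int (if s < n then - p s else q (s-n)) * illl_column n A c s t)
      = (\<Sum>s<n. if s = t then - of_int (p s) else 0)
        + (\<Sum>j<m. of_int (q j) * (if t < n then A t j else if t = n+j then c else 0))"
    unfolding add.commute[of m n] sum_add_lessThan illl_column_def by (intro arg_cong2[where f = "(+)"] sum.cong) auto
  also have "\<dots> = lvec m n A c p q t"
  proof (cases "t < n")
    case False
    then obtain j where j: "t = n + j" "j < m"
      using assms by (metis add.commute add_diff_inverse_nat add_less_imp_less_left)
    have "(\<Sum>j'<m. of_int (q j') * (if t < n then A t j' else if t = n+j' then c else 0))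
        = (\<Sum>j'<m. if j' = j then of_int (q j) * c else 0)"
      by (rule sum.cong) (use j in auto)
    then show ?thesis using False j by (simp add: lvec_def)
  qed (simp add: lvec_def)
  finally show ?thesis by simp
qed

lemma illl_column_eq_lvec:
  assumes "s < m + n"
  obtains p q where "\<And>t. illl_column n A c s t = lvec m n A c p q t"
proof (cases "s < n")
  case True
  show ?thesis
    by (rule that[of "\<lambda>i. if i = s then -1 else 0" "\<lambda>j. 0"]) (use True in \<open>auto simp: illl_column_def lvec_def\<close>)
next
  case False
  have "(\<Sum>j<m. real_of_int (if j = s - n then 1 else 0) * A t j) = A t (s - n)" for t
    using False assms by (subst sum.cong[OF refl, of _ _ "\<lambda>j. if j = s - n then A t j else 0"]) auto
  then show ?thesis
    by (intro that[of "\<lambda>i. 0" "\<lambda>j. if j = s - n then 1 else 0"]) (use False assms in \<open>auto simp: illl_column_def lvec_def\<close>)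
qed

lemma det_illl_columns: "det (mat (m+n) (m+n) (\<lambda>(s,t). illl_column n A c s t)) = c ^ m"
proof -
  have "det (mat (m+n) (m+n) (\<lambda>(s,t). illl_column n A c s t)) = (\<Prod>s<m+n. illl_column n A c s s)"
    by (subst det_mat_lower_triangular) (auto simp: illl_column_def)
  also have "\<dots> = c ^ m"
    unfolding add.commute[of m n] prod_add_lessThan by (simp add: illl_column_def)
  finally show ?thesis .
qed

lemma lattice_basis_det_square:
  assumes lb: "lattice_basis m n A c b" and "c \<noteq> 0"
  shows "det (mat (m+n) (m+n) (\<lambda>(i,t). b i t)) ^ 2 = c ^ (2*m)"
proof -
  define r where "r = m + n"
  have "\<forall>i. \<exists>pq. i < r \<longrightarrow> (\<forall>t<r. b i t = lvec m n A c (fst pq) (snd pq) t)"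
    using lb unfolding lattice_basis_def r_def by fastforce
  then obtain PQ where PQ: "\<And>i t. i < r \<Longrightarrow> t < r \<Longrightarrow> b i t = lvec m n A c (fst (PQ i)) (snd (PQ i)) t"
    by metis
  have "\<exists>z. \<forall>t<r. illl_column n A c s t = (\<Sum>i<r. of_int (z i) * b i t)" if "s < r" for s
  proof -
    obtain p q where "\<And>t. illl_column n A c s t = lvec m n A c p q t"
      using illl_column_eq_lvec \<open>s < r\<close> unfolding r_def by blast
    then show ?thesis using lb unfolding lattice_basis_def r_def by simp
  qed
  then obtain Z where Z: "\<And>s t. s < r \<Longrightarrow> t < r \<Longrightarrow> illl_column n A c s t = (\<Sum>i<r. of_int (Z s i) * b i t)"
    by metis
  define U :: "int mat" where
    "U = mat r r (\<lambda>(i,s). if s < n then - fst (PQ i) s else snd (PQ i) (s-n))"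
  define V :: "int mat" where "V = mat r r (\<lambda>(s,i). Z s i)"
  define B where "B = mat r r (\<lambda>(i,t). b i t)"
  define C where "C = mat r r (\<lambda>(s,t). illl_column n A c s t)"
  have det_C: "det C = c ^ m" unfolding C_def r_def by (rule det_illl_columns)
  have "B = map_mat of_int U * C"
    unfolding B_def U_def C_def map_mat_mat mat_times_mat
    by (rule eq_matI) (auto simp: PQ lvec_eq_sum_illl_column r_def)
  moreover have "C = map_mat of_int V * B"
    unfolding B_def V_def C_def map_mat_mat mat_times_mat by (rule eq_matI) (auto simp: Z)
  ultimately have "det B ^ 2 = det C ^ 2"
    using \<open>c \<noteq> 0\<close> det_C
    by (intro det_square_eq_if_integral_transitions[of _ r]) (auto simp: B_def C_def U_def V_def)
  then show ?thesis unfolding B_def r_def det_C by (simp add: power_mult[symmetric] mult.commute)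
qed

lemma ccoef_eq_powr:
  assumes "m \<ge> 1"
  shows "ccoef m n k = 2 powr ((- (real (m+n) + 3) / 4 - real k + 1) * real (m+n) / real m)"
  unfolding ccoef_def by (simp add: powr_powr)

lemma illl_first_norm_le:
  assumes "m \<ge> 1" and "lattice_basis m n A (ccoef m n k) b" and "lll_reduced (m+n) b"
  shows "ip (m+n) (b 0) (b 0) \<le> 2 powr (-2 * real k)"
proof -
  define r where "r = m + n"
  define x where "x = - (real r + 3) / 4 - real k + 1"
  have "ccoef m n k ^ m = (2 powr (x * real r / real m)) powr real m"
    using ccoef_eq_powr[OF assms(1)] by (simp add: powr_realpow x_def r_def)
  then have c_pow: "ccoef m n k ^ m = 2 powr (x * real r)"
    using assms(1) by (simp add: powr_powr)
  have "ccoef m n k \<noteq> 0" by (simp add: ccoef_def)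
  then have "det (mat r r (\<lambda>(i,t). b i t)) ^ 2 = (ccoef m n k ^ m) ^ 2"
    using lattice_basis_det_square[OF assms(2)] by (simp add: r_def power_mult[symmetric] mult.commute)
  then have "ip r (b 0) (b 0) ^ r \<le> 2 powr (real r * (real r - 1) / 2) * (ccoef m n k ^ m) ^ 2"
    using lll_first_pow_le_det_square[OF assms(3)] by (simp add: r_def)
  also have "\<dots> = 2 powr (real r * (real r - 1) / 2 + 2 * x * real r)"
    by (simp add: c_pow powr_add powr_realpow[symmetric] powr_powr mult_ac)
  also have "\<dots> = (2 powr (-2 * real k)) ^ r"
    by (simp add: powr_realpow[symmetric] powr_powr x_def field_simps)
  finally have "ip r (b 0) (b 0) ^ r \<le> (2 powr (-2 * real k)) ^ r" .
  moreover have "r > 0" using assms(1) by (simp add: r_def)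
  ultimately show ?thesis
    unfolding r_def by (metis power_le_imp_le_base powr_ge_zero Suc_pred)
qed

lemma illl_first_coord_le:
  assumes "m \<ge> 1" and "lattice_basis m n A (ccoef m n k) b" and "lll_reduced (m+n) b" and "t < m + n"
  shows "\<bar>b 0 t\<bar> \<le> 2 powr (- real k)"
proof (rule power2_le_imp_le)
  have "\<bar>b 0 t\<bar>\<^sup>2 \<le> ip (m+n) (b 0) (b 0)" using coord_square_le_ip[OF assms(4)] by simp
  also have "\<dots> \<le> 2 powr (-2 * real k)" by (rule illl_first_norm_le[OF assms(1-3)])
  also have "\<dots> = (2 powr (- real k))\<^sup>2" by (simp add: powr_realpow[symmetric] powr_powr mult.commute)
  finally show "\<bar>b 0 t\<bar>\<^sup>2 \<le> (2 powr (- real k))\<^sup>2" .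
qed simp

lemma powr_neg_divide_ccoef:
  assumes "m \<ge> 1"
  shows "2 powr (- real k) / ccoef m n k
    = 2 powr ((real (m+n) - 1) * real (m+n) / (4 * real m)) * 2 powr (real k * real n / real m)"
  unfolding ccoef_eq_powr[OF assms] powr_add[symmetric] powr_diff[symmetric]
  using assms by (simp add: field_simps)

lemma dni_le_abs_diff: "dni x \<le> \<bar>x - of_int p\<bar>"
proof (cases "p \<le> \<lfloor>x\<rfloor>")
  case True
  then have "x - of_int \<lfloor>x\<rfloor> \<le> \<bar>x - of_int p\<bar>"
    by (smt (verit) of_int_floor_le of_int_le_iff)
  then show ?thesis unfolding dni_def by linarith
next
  case False
  then have "x \<le> of_int p" by (smt (verit) floor_less_iff of_int_less_iff not_le)
  then have "of_int \<lceil>x\<rceil> - x \<le> \<bar>x - of_int p\<bar>"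
    by (smt (verit) ceiling_le_iff of_int_le_iff)
  then show ?thesis unfolding dni_def by linarith
qed

theorem lemma3:
  fixes m n k :: nat and A :: "nat \<Rightarrow> nat \<Rightarrow> real" and qmax :: real
    and b :: "nat \<Rightarrow> nat \<Rightarrow> real" and p q :: "nat \<Rightarrow> int"
  assumes "m \<ge> 1" and "n \<ge> 1" and "qmax > 1"
    and "1 \<le> k" and "int k \<le> kprime m n qmax"
    and "lattice_basis m n A (ccoef m n k) b"
    and "lll_reduced (m+n) b"
    and "\<forall>t<m+n. b 0 t = lvec m n A (ccoef m n k) p q t"
  shows "(\<forall>j<m. real_of_int \<bar>q j\<bar> \<le>
            2 powr ((real (m+n) - 1) * real (m+n) / (4 * real m)) * 2 powr (real k * real n / real m))
       \<and> (\<forall>i<n. dni (\<Sum>j<m. of_int (q j) * A i j) \<le> 2 powr (- real k))"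
proof -
  note coord_le = illl_first_coord_le[OF assms(1,6,7)]
  have c_pos: "ccoef m n k > 0" by (simp add: ccoef_def)
  have "real_of_int \<bar>q j\<bar> \<le>
      2 powr ((real (m+n) - 1) * real (m+n) / (4 * real m)) * 2 powr (real k * real n / real m)"
    if "j < m" for j
  proof -
    have "ccoef m n k * real_of_int \<bar>q j\<bar> \<le> 2 powr (- real k)"
      using coord_le[of "n + j"] assms(8) c_pos \<open>j < m\<close> by (simp add: lvec_def abs_mult)
    with c_pos show ?thesis
      unfolding powr_neg_divide_ccoef[OF assms(1), symmetric] by (simp add: field_simps)
  qed
  moreover have "dni (\<Sum>j<m. of_int (q j) * A i j) \<le> 2 powr (- real k)" if "i < n" for i
  proof -
    have "b 0 i = (\<Sum>j<m. of_int (q j) * A i j) - of_int (p i)"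
      using assms(8) \<open>i < n\<close> by (simp add: lvec_def)
    then show ?thesis
      using dni_le_abs_diff[of "\<Sum>j<m. of_int (q j) * A i j" "p i"] coord_le[of i] \<open>i < n\<close> by simp
  qed
  ultimately show ?thesis by blast
qed

end
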